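(* Suppose $(B,b)$ is a type (2) Whitehead automorphism and $a\in L$ satisfies $a\ge b$ and $a,a^{-1}\notin B$. Suppose $[u]$ is an element or a conjugacy class of $A_\Gamma$ with $\bar b\notin\mathrm{supp}[u]$, and $v$ is a graphically reduced word (respectively cyclic word) representing $(B,b)([u])$. Let $v'$ be obtained from $v$ by replacing every occurrence of $b$ by $a$ and every occurrence of $b^{-1}$ by $a^{-1}$. Then $v'$ represents $((B\setminus\{b\})\cup\{a\},a)([u])$.
   Context: $\Gamma$ is a finite simplicial graph with vertex set $X$, $A_\Gamma$ its right-angled Artin group, $L=X\cup X^{-1}$, $\bar u$ the vertex of a letter $u$, $\mathrm{lk}(v)$ neighbours, $\mathrm{st}(v)=\mathrm{lk}(v)\cup\{v\}$; domination $v\ge w$ iff $\mathrm{lk}(w)\subset\mathrm{st}(v)$, extended to letters via vertices. For $a\in A\subset L$ with $a^{-1}\notin A$, $(A,a)$ denotes the map fixing $a$ and sending $x\in L\setminus\{a^{\pm1}\}$ to $a^{-\epsilon}xa^{\delta}$ where $\delta=1$ if $x\in A$ (else $0$) and $\epsilon=1$ if $x^{-1}\in A$ (else $0$); a type (2) Whitehead automorphism is such a map that is an automorphism of $A_\Gamma$. Under the hypotheses of the claim, $((B\setminus\{b\})\cup\{a\},a)$ is also a well-defined automorphism. A word (cyclic word) is graphically reduced if it has minimal length among words representing the same element (conjugacy class). The support of an element/conjugacy class is the set of vertices occurring in a graphically reduced representative. *)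

theory Defs
  imports Main
begin

text \<open>A letter is a pair (vertex, sign); (x,True) is x, (x,False) is x^-1.\<close>
type_synonym 'v letter = "'v \<times> bool"
type_synonym 'v word = "'v letter list"

definition letters :: "'v set \<Rightarrow> 'v letter set" where
  "letters X = X \<times> UNIV"

definition linv :: "'v letter \<Rightarrow> 'v letter" where
  "linv x = (fst x, \<not> snd x)"

definition winv :: "'v word \<Rightarrow> 'v word" where
  "winv w = rev (map linv w)"

definition simplicial_graph :: "'v set \<Rightarrow> ('v \<Rightarrow> 'v \<Rightarrow> bool) \<Rightarrow> bool" where
  "simplicial_graph X E \<longleftrightarrow> finite X \<and> (\<forall>x y. E x y \<longrightarrow> x \<in> X \<and> y \<in> X)
     \<and> (\<forall>x y. E x y \<longrightarrow> E y x) \<and> (\<forall>x. \<not> E x x)"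

inductive raag_eq :: "('v \<Rightarrow> 'v \<Rightarrow> bool) \<Rightarrow> 'v word \<Rightarrow> 'v word \<Rightarrow> bool" for E where
  refl: "raag_eq E w w"
| sym: "raag_eq E w w' \<Longrightarrow> raag_eq E w' w"
| trans: "raag_eq E w1 w2 \<Longrightarrow> raag_eq E w2 w3 \<Longrightarrow> raag_eq E w1 w3"
| cancel: "raag_eq E (u @ [x, linv x] @ w) (u @ w)"
| commute: "E (fst x) (fst y) \<Longrightarrow> raag_eq E (u @ [x, y] @ w) (u @ [y, x] @ w)"

definition raag_conj :: "'v set \<Rightarrow> ('v \<Rightarrow> 'v \<Rightarrow> bool) \<Rightarrow> 'v word \<Rightarrow> 'v word \<Rightarrow> bool" where
  "raag_conj X E w1 w2 \<longleftrightarrow> (\<exists>g \<in> lists (letters X). raag_eq E (g @ w1 @ winv g) w2)"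

definition graph_reduced :: "'v set \<Rightarrow> ('v \<Rightarrow> 'v \<Rightarrow> bool) \<Rightarrow> 'v word \<Rightarrow> bool" where
  "graph_reduced X E w \<longleftrightarrow> w \<in> lists (letters X) \<and>
     (\<forall>w' \<in> lists (letters X). raag_eq E w w' \<longrightarrow> length w \<le> length w')"

definition cyc_reduced :: "'v set \<Rightarrow> ('v \<Rightarrow> 'v \<Rightarrow> bool) \<Rightarrow> 'v word \<Rightarrow> bool" where
  "cyc_reduced X E w \<longleftrightarrow> w \<in> lists (letters X) \<and>
     (\<forall>w' \<in> lists (letters X). raag_conj X E w w' \<longrightarrow> length w \<le> length w')"

definition supp_elem :: "'v set \<Rightarrow> ('v \<Rightarrow> 'v \<Rightarrow> bool) \<Rightarrow> 'v word \<Rightarrow> 'v set" where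
  "supp_elem X E u = fst ` set (SOME w. graph_reduced X E w \<and> raag_eq E w u)"

definition supp_conj :: "'v set \<Rightarrow> ('v \<Rightarrow> 'v \<Rightarrow> bool) \<Rightarrow> 'v word \<Rightarrow> 'v set" where
  "supp_conj X E u = fst ` set (SOME w. cyc_reduced X E w \<and> raag_conj X E w u)"

definition lk :: "'v set \<Rightarrow> ('v \<Rightarrow> 'v \<Rightarrow> bool) \<Rightarrow> 'v \<Rightarrow> 'v set" where
  "lk X E v = {w \<in> X. E v w}"

definition st :: "'v set \<Rightarrow> ('v \<Rightarrow> 'v \<Rightarrow> bool) \<Rightarrow> 'v \<Rightarrow> 'v set" where
  "st X E v = insert v (lk X E v)"

definition dominates :: "'v set \<Rightarrow> ('v \<Rightarrow> 'v \<Rightarrow> bool) \<Rightarrow> 'v letter \<Rightarrow> 'v letter \<Rightarrow> bool" where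
  "dominates X E a b \<longleftrightarrow> lk X E (fst b) \<subseteq> st X E (fst a)"

definition wh_letter :: "'v letter set \<Rightarrow> 'v letter \<Rightarrow> 'v letter \<Rightarrow> 'v word" where
  "wh_letter A a x = (if x = a \<or> x = linv a then [x]
     else (if linv x \<in> A then [linv a] else []) @ [x] @ (if x \<in> A then [a] else []))"

definition wh :: "'v letter set \<Rightarrow> 'v letter \<Rightarrow> 'v word \<Rightarrow> 'v word" where
  "wh A a w = concat (map (wh_letter A a) w)"

definition is_raag_aut :: "'v set \<Rightarrow> ('v \<Rightarrow> 'v \<Rightarrow> bool) \<Rightarrow> ('v word \<Rightarrow> 'v word) \<Rightarrow> bool" where
  "is_raag_aut X E f \<longleftrightarrow>
     (\<forall>w \<in> lists (letters X). f w \<in> lists (letters X)) \<and>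
     (\<forall>w1 \<in> lists (letters X). \<forall>w2 \<in> lists (letters X). raag_eq E w1 w2 \<longrightarrow> raag_eq E (f w1) (f w2)) \<and>
     (\<forall>w1 \<in> lists (letters X). \<forall>w2 \<in> lists (letters X). raag_eq E (f w1) (f w2) \<longrightarrow> raag_eq E w1 w2) \<and>
     (\<forall>w \<in> lists (letters X). \<exists>w' \<in> lists (letters X). raag_eq E (f w') w)"

definition whitehead2 :: "'v set \<Rightarrow> ('v \<Rightarrow> 'v \<Rightarrow> bool) \<Rightarrow> 'v letter set \<Rightarrow> 'v letter \<Rightarrow> bool" where
  "whitehead2 X E A a \<longleftrightarrow> A \<subseteq> letters X \<and> a \<in> A \<and> linv a \<notin> A \<and> is_raag_aut X E (wh A a)"

definition repl :: "'v letter \<Rightarrow> 'v letter \<Rightarrow> 'v word \<Rightarrow> 'v word" where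
  "repl b a w = map (\<lambda>x. if x = b then a else if x = linv b then linv a else x) w"

end

theory Submission imports Defs begin

text \<open>Since a dominates b, every vertex adjacent to b lies in the star of a, so the substitution
  R replacing b by a respects the defining relations. On every letter other than b and its
  inverse, the map ((B - {b}) \<union> {a}, a) agrees with R composed with (B, b); it is itself a
  homomorphism because b commutes with its image of each neighbour of b. If w is a reduced
  representative of [u], its support avoids b, so R((B, b) w) = ((B - {b}) \<union> {a}, a) w, and
  applying R to v = (B, b) u = (B, b) w gives the claim.\<close>

lemma linv_linv [simp]: "linv (linv x) = x"
  by (simp add: linv_def)

lemma fst_linv [simp]: "fst (linv x) = fst x"
  by (simp add: linv_def)

lemma linv_neq [simp]: "linv x \<noteq> x" "x \<noteq> linv x"
  by (auto simp: linv_def prod_eq_iff)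

lemma linv_inject [simp]: "linv x = linv y \<longleftrightarrow> x = y"
  by (metis linv_linv)

lemma fst_eq_imp_eq_or_linv: "fst x = fst y \<Longrightarrow> y = x \<or> y = linv x"
  by (cases x, cases y) (auto simp: linv_def)

lemma winv_Nil [simp]: "winv [] = []"
  by (simp add: winv_def)

lemma winv_Cons [simp]: "winv (x # p) = winv p @ [linv x]"
  by (simp add: winv_def)

lemma winv_append [simp]: "winv (p @ q) = winv q @ winv p"
  by (simp add: winv_def)

lemma winv_winv [simp]: "winv (winv p) = p"
  by (simp add: winv_def rev_map comp_def)

lemma linv_in_letters: "x \<in> letters X \<Longrightarrow> linv x \<in> letters X"
  by (simp add: letters_def linv_def mem_Times_iff)

lemma winv_in_lists: "w \<in> lists (letters X) \<Longrightarrow> winv w \<in> lists (letters X)"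
  by (induction w) (auto simp: linv_in_letters)

subsection \<open>Equality in the right-angled Artin group\<close>

declare raag_eq.trans [trans]

lemma raag_eq_append_cong: "raag_eq E w w' \<Longrightarrow> raag_eq E (p @ w @ q) (p @ w' @ q)"
proof (induction rule: raag_eq.induct)
  case (cancel u x w)
  show ?case using raag_eq.cancel[of E "p @ u" x "w @ q"] by simp
next
  case (commute x y u w)
  then show ?case using raag_eq.commute[of E x y "p @ u" "w @ q"] by simp
qed (auto intro: raag_eq.intros)

lemma raag_eq_winv_right: "raag_eq E (p @ winv p) []"
proof (induction p)
  case Nil
  show ?case by (simp add: raag_eq.refl)
next
  case (Cons x p)
  have "raag_eq E ([x] @ (p @ winv p) @ [linv x]) ([x] @ [] @ [linv x])"
    by (rule raag_eq_append_cong[OF Cons])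
  moreover have "raag_eq E ([] @ [x, linv x] @ []) ([] @ [])"
    by (rule raag_eq.cancel)
  ultimately show ?case by (auto intro: raag_eq.trans)
qed

lemma raag_eq_winv_left: "raag_eq E (winv p @ p) []"
  using raag_eq_winv_right[of E "winv p"] by simp

lemma raag_eq_cancel_left: "raag_eq E (p @ q) (p @ r) \<Longrightarrow> raag_eq E q r"
proof -
  assume h: "raag_eq E (p @ q) (p @ r)"
  have "raag_eq E (winv p @ (p @ q) @ []) (winv p @ (p @ r) @ [])"
    by (rule raag_eq_append_cong[OF h])
  moreover have "raag_eq E ([] @ (winv p @ p) @ s) ([] @ [] @ s)" for s
    by (rule raag_eq_append_cong[OF raag_eq_winv_left])
  ultimately show ?thesis by simp (metis raag_eq.sym raag_eq.trans)
qed

definition commutes :: "('v \<Rightarrow> 'v \<Rightarrow> bool) \<Rightarrow> 'v word \<Rightarrow> 'v word \<Rightarrow> bool" where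
  "commutes E p q \<longleftrightarrow> raag_eq E (p @ q) (q @ p)"

lemma commutes_sym: "commutes E p q \<Longrightarrow> commutes E q p"
  by (simp add: commutes_def raag_eq.sym)

lemma commutes_Nil [simp]: "commutes E p []"
  by (simp add: commutes_def raag_eq.refl)

lemma commutes_adjacent: "E (fst x) (fst y) \<Longrightarrow> commutes E [x] [y]"
  using raag_eq.commute[of E x y "[]" "[]"] by (simp add: commutes_def)

lemma commutes_same_vertex: "fst x = fst y \<Longrightarrow> commutes E [x] [y]"
proof -
  assume "fst x = fst y"
  then consider "y = x" | "y = linv x"
    using fst_eq_imp_eq_or_linv by blast
  then show ?thesis
  proof cases
    case 1
    then show ?thesis by (simp add: commutes_def raag_eq.refl)
  next
    case 2
    have "raag_eq E ([x] @ [y]) []" "raag_eq E ([y] @ [x]) []"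
      using raag_eq.cancel[of E "[]" x "[]"] raag_eq.cancel[of E "[]" y "[]"] 2 by simp_all
    then show ?thesis unfolding commutes_def by (metis raag_eq.sym raag_eq.trans)
  qed
qed

lemma commutes_append: "commutes E p q1 \<Longrightarrow> commutes E p q2 \<Longrightarrow> commutes E p (q1 @ q2)"
proof -
  assume h1: "commutes E p q1" and h2: "commutes E p q2"
  have "raag_eq E ([] @ (p @ q1) @ q2) ([] @ (q1 @ p) @ q2)"
    using h1 by (intro raag_eq_append_cong) (simp add: commutes_def)
  moreover have "raag_eq E (q1 @ (p @ q2) @ []) (q1 @ (q2 @ p) @ [])"
    using h2 by (intro raag_eq_append_cong) (simp add: commutes_def)
  ultimately show ?thesis unfolding commutes_def by simp (metis raag_eq.trans)
qed

lemma commutes_raag_eq: "raag_eq E q q' \<Longrightarrow> commutes E p q \<Longrightarrow> commutes E p q'"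
proof -
  assume h: "raag_eq E q q'" and c: "commutes E p q"
  have "raag_eq E (p @ q @ []) (p @ q' @ [])" "raag_eq E ([] @ q @ p) ([] @ q' @ p)"
    using raag_eq_append_cong[OF h] by blast+
  then show ?thesis using c unfolding commutes_def by simp (metis raag_eq.sym raag_eq.trans)
qed

lemma commutes_append_cancel: "commutes E r (s @ t) \<Longrightarrow> commutes E r s \<Longrightarrow> commutes E r t"
proof -
  assume h1: "commutes E r (s @ t)" and h2: "commutes E r s"
  have "raag_eq E ([] @ (r @ s) @ t) ([] @ (s @ r) @ t)"
    using h2 by (intro raag_eq_append_cong) (simp add: commutes_def)
  then have "raag_eq E (s @ r @ t) (s @ t @ r)"
    using h1 unfolding commutes_def by simp (metis raag_eq.sym raag_eq.trans)
  then show ?thesis unfolding commutes_def by (rule raag_eq_cancel_left)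
qed

lemma commutes_winv: "commutes E p q \<Longrightarrow> commutes E p (winv q)"
proof -
  assume c: "commutes E p q"
  have "commutes E p (q @ winv q)"
    by (rule commutes_raag_eq[OF raag_eq.sym[OF raag_eq_winv_right]]) simp
  then show ?thesis using commutes_append_cancel c by blast
qed

lemma raag_eq_conj_commuting: "commutes E p q \<Longrightarrow> raag_eq E (winv p @ q @ p) q"
proof -
  assume "commutes E p q"
  then have "raag_eq E (winv p @ (q @ p) @ []) (winv p @ (p @ q) @ [])"
    by (intro raag_eq_append_cong) (simp add: commutes_def raag_eq.sym)
  moreover have "raag_eq E ([] @ (winv p @ p) @ q) ([] @ [] @ q)"
    by (rule raag_eq_append_cong[OF raag_eq_winv_left])
  ultimately show ?thesis by (simp add: raag_eq.trans)
qed

lemma raag_eq_concat_map: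
  assumes "\<And>x y. E (fst x) (fst y) \<Longrightarrow> commutes E (\<phi> x) (\<phi> y)"
    and "\<And>x. \<phi> (linv x) = winv (\<phi> x)"
  shows "raag_eq E w w' \<Longrightarrow> raag_eq E (concat (map \<phi> w)) (concat (map \<phi> w'))"
proof (induction rule: raag_eq.induct)
  case (cancel u x w)
  show ?case
    using raag_eq_append_cong[OF raag_eq_winv_right[of E "\<phi> x"],
        of "concat (map \<phi> u)" "concat (map \<phi> w)"]
    by (simp add: assms(2))
next
  case (commute x y u w)
  then show ?case
    using raag_eq_append_cong[of E "\<phi> x @ \<phi> y" "\<phi> y @ \<phi> x" "concat (map \<phi> u)"
        "concat (map \<phi> w)"] assms(1)
    by (simp add: commutes_def)
qed (auto intro: raag_eq.intros)

lemma raag_eq_imp_raag_conj: "raag_eq E w w' \<Longrightarrow> raag_conj X E w w'"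
  unfolding raag_conj_def by (intro bexI[of _ "[]"]) auto

lemma raag_conj_sym:
  assumes "raag_conj X E w1 w2"
  shows "raag_conj X E w2 w1"
proof -
  obtain g where g: "g \<in> lists (letters X)" "raag_eq E (g @ w1 @ winv g) w2"
    using assms by (auto simp: raag_conj_def)
  have "raag_eq E (winv g @ w2 @ g) (winv g @ (g @ w1 @ winv g) @ g)"
    using raag_eq_append_cong[OF raag_eq.sym[OF g(2)]] .
  moreover have "raag_eq E ([] @ (winv g @ g) @ s) ([] @ [] @ s)" for s
    by (rule raag_eq_append_cong[OF raag_eq_winv_left])
  moreover have "raag_eq E (s @ (winv g @ g) @ []) (s @ [] @ [])" for s
    by (rule raag_eq_append_cong[OF raag_eq_winv_left])
  ultimately have "raag_eq E (winv g @ w2 @ winv (winv g)) w1"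
    by simp (metis append_assoc raag_eq.trans)
  then show ?thesis using winv_in_lists[OF g(1)] unfolding raag_conj_def by blast
qed

lemma raag_conj_trans:
  assumes "raag_conj X E w1 w2" and "raag_conj X E w2 w3"
  shows "raag_conj X E w1 w3"
proof -
  obtain g where g: "g \<in> lists (letters X)" "raag_eq E (g @ w1 @ winv g) w2"
    using assms(1) by (auto simp: raag_conj_def)
  obtain h where h: "h \<in> lists (letters X)" "raag_eq E (h @ w2 @ winv h) w3"
    using assms(2) by (auto simp: raag_conj_def)
  have "raag_eq E (h @ (g @ w1 @ winv g) @ winv h) (h @ w2 @ winv h)"
    by (rule raag_eq_append_cong[OF g(2)])
  then have "raag_eq E ((h @ g) @ w1 @ winv (h @ g)) w3"
    using h(2) by simp (metis raag_eq.trans)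
  moreover have "h @ g \<in> lists (letters X)"
    using g(1) h(1) by simp
  ultimately show ?thesis unfolding raag_conj_def by blast
qed

declare raag_conj_trans [trans]

lemma raag_conj_hom:
  assumes closed: "\<And>w. w \<in> lists (letters X) \<Longrightarrow> F w \<in> lists (letters X)"
    and resp: "\<And>w w'. w \<in> lists (letters X) \<Longrightarrow> w' \<in> lists (letters X) \<Longrightarrow>
      raag_eq E w w' \<Longrightarrow> raag_eq E (F w) (F w')"
    and append: "\<And>p q. F (p @ q) = F p @ F q"
    and inverse: "\<And>p. F (winv p) = winv (F p)"
    and w: "w \<in> lists (letters X)" "w' \<in> lists (letters X)"
    and conj: "raag_conj X E w w'"
  shows "raag_conj X E (F w) (F w')"
proof -
  obtain g where g: "g \<in> lists (letters X)" "raag_eq E (g @ w @ winv g) w'"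
    using conj by (auto simp: raag_conj_def)
  have "g @ w @ winv g \<in> lists (letters X)"
    using g(1) w winv_in_lists by auto
  then have "raag_eq E (F g @ F w @ winv (F g)) (F w')"
    using resp[OF _ w(2) g(2)] by (simp add: append inverse)
  then show ?thesis using closed[OF g(1)] unfolding raag_conj_def by blast
qed

lemma graph_reduced_exists:
  assumes "u \<in> lists (letters X)"
  shows "\<exists>w. graph_reduced X E w \<and> raag_eq E w u"
proof -
  let ?P = "\<lambda>w. w \<in> lists (letters X) \<and> raag_eq E w u"
  obtain w where w: "?P w" "\<And>y. ?P y \<Longrightarrow> length w \<le> length y"
    using ex_has_least_nat[of ?P u length] assms raag_eq.refl by blast
  then have "graph_reduced X E w"
    unfolding graph_reduced_def by (meson raag_eq.sym raag_eq.trans)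
  then show ?thesis using w by blast
qed

lemma cyc_reduced_exists:
  assumes "u \<in> lists (letters X)"
  shows "\<exists>w. cyc_reduced X E w \<and> raag_conj X E w u"
proof -
  let ?P = "\<lambda>w. w \<in> lists (letters X) \<and> raag_conj X E w u"
  obtain w where w: "?P w" "\<And>y. ?P y \<Longrightarrow> length w \<le> length y"
    using ex_has_least_nat[of ?P u length] assms raag_eq_imp_raag_conj raag_eq.refl by blast
  then have "cyc_reduced X E w"
    unfolding cyc_reduced_def by (meson raag_conj_sym raag_conj_trans)
  then show ?thesis using w by blast
qed

subsection \<open>Replacing a dominated letter\<close>

definition repl_letter :: "'v letter \<Rightarrow> 'v letter \<Rightarrow> 'v letter \<Rightarrow> 'v letter" where
  "repl_letter b a x = (if x = b then a else if x = linv b then linv a else x)"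

lemma repl_eq_map: "repl b a w = map (repl_letter b a) w"
  by (simp add: repl_def repl_letter_def)

lemma repl_letter_linv: "repl_letter b a (linv x) = linv (repl_letter b a x)"
  by (auto simp: repl_letter_def)

lemma repl_append: "repl b a (p @ q) = repl b a p @ repl b a q"
  by (simp add: repl_def)

lemma repl_winv: "repl b a (winv w) = winv (repl b a w)"
  by (simp add: repl_eq_map winv_def rev_map repl_letter_linv)

lemma repl_in_lists: "a \<in> letters X \<Longrightarrow> w \<in> lists (letters X) \<Longrightarrow> repl b a w \<in> lists (letters X)"
  by (induction w) (auto simp: repl_def linv_in_letters)

lemma commutes_repl_letter_of_vertex:
  assumes graph: "simplicial_graph X E" and dom: "dominates X E a b"
    and adj: "E (fst x) (fst y)" and x: "fst x = fst b"
  shows "commutes E [repl_letter b a x] [repl_letter b a y]"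
proof -
  have "fst y \<noteq> fst b" "fst y \<in> lk X E (fst b)"
    using graph adj x by (auto simp: lk_def simplicial_graph_def)
  then have y: "repl_letter b a y = y" and "fst y \<in> st X E (fst a)"
    using dom by (auto simp: repl_letter_def dominates_def)
  moreover have "fst (repl_letter b a x) = fst a"
    using x fst_eq_imp_eq_or_linv[of b x] by (auto simp: repl_letter_def)
  ultimately have "fst (repl_letter b a x) = fst y \<or> E (fst (repl_letter b a x)) (fst y)"
    by (auto simp: st_def lk_def)
  then have "commutes E [repl_letter b a x] [y]"
    using commutes_same_vertex[of "repl_letter b a x" y E]
      commutes_adjacent[of E "repl_letter b a x" y] by blast
  then show ?thesis by (simp only: y)
qed

lemma raag_eq_repl:
  assumes graph: "simplicial_graph X E" and dom: "dominates X E a b"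
    and "raag_eq E w w'"
  shows "raag_eq E (repl b a w) (repl b a w')"
proof -
  have "commutes E [repl_letter b a x] [repl_letter b a y]" if adj: "E (fst x) (fst y)" for x y
  proof -
    have adj': "E (fst y) (fst x)"
      using graph adj by (simp add: simplicial_graph_def)
    consider "fst x = fst b" | "fst y = fst b" | "fst x \<noteq> fst b" "fst y \<noteq> fst b"
      by blast
    then show ?thesis
    proof cases
      case 1
      then show ?thesis by (rule commutes_repl_letter_of_vertex[OF graph dom adj])
    next
      case 2
      then show ?thesis
        by (rule commutes_sym[OF commutes_repl_letter_of_vertex[OF graph dom adj']])
    next
      case 3
      then have "repl_letter b a x = x" "repl_letter b a y = y"
        by (auto simp: repl_letter_def)
      then show ?thesis using commutes_adjacent[of E x y, OF adj] by (simp only:)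
    qed
  qed
  moreover have "[repl_letter b a (linv x)] = winv [repl_letter b a x]" for x
    by (simp add: repl_letter_linv)
  ultimately have "raag_eq E (concat (map (\<lambda>x. [repl_letter b a x]) w))
      (concat (map (\<lambda>x. [repl_letter b a x]) w'))"
    by (rule raag_eq_concat_map[OF _ _ assms(3)])
  moreover have "repl b a v = concat (map (\<lambda>x. [repl_letter b a x]) v)" for v
    by (induction v) (simp_all add: repl_eq_map)
  ultimately show ?thesis by metis
qed

subsection \<open>Whitehead automorphisms\<close>

lemma wh_letter_linv: "wh_letter A a (linv x) = winv (wh_letter A a x)"
  by (auto simp: wh_letter_def)

lemma wh_append: "wh A a (p @ q) = wh A a p @ wh A a q"
  by (simp add: wh_def)

lemma wh_winv: "wh A a (winv w) = winv (wh A a w)"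
  by (induction w) (simp_all add: wh_def wh_letter_linv)

lemma wh_in_lists:
  "a \<in> letters X \<Longrightarrow> A \<subseteq> letters X \<Longrightarrow> w \<in> lists (letters X) \<Longrightarrow> wh A a w \<in> lists (letters X)"
  by (induction w) (auto simp: wh_def wh_letter_def linv_in_letters)

locale dominated_whitehead =
  fixes X :: "'v set" and E :: "'v \<Rightarrow> 'v \<Rightarrow> bool"
    and B :: "'v letter set" and a b :: "'v letter"
  assumes graph: "simplicial_graph X E"
    and whitehead: "whitehead2 X E B b"
    and a_letter: "a \<in> letters X"
    and dominates: "dominates X E a b"
    and a_notin: "a \<notin> B" and linv_a_notin: "linv a \<notin> B"
begin

abbreviation B' :: "'v letter set" where
  "B' \<equiv> (B - {b}) \<union> {a}"

lemma b_in: "b \<in> B" and linv_b_notin: "linv b \<notin> B" and B_letters: "B \<subseteq> letters X"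
  and wh_aut: "is_raag_aut X E (wh B b)"
  using whitehead by (auto simp: whitehead2_def)

lemma b_letter: "b \<in> letters X"
  using b_in B_letters by blast

lemma raag_eq_wh:
  "w \<in> lists (letters X) \<Longrightarrow> w' \<in> lists (letters X) \<Longrightarrow> raag_eq E w w' \<Longrightarrow>
    raag_eq E (wh B b w) (wh B b w')"
  using wh_aut unfolding is_raag_aut_def by blast

lemma a_neq_b: "a \<noteq> b" "a \<noteq> linv b"
  using a_notin linv_a_notin b_in by auto

lemma adjacent_letters: "E (fst x) (fst y) \<Longrightarrow> x \<in> letters X \<and> y \<in> letters X"
  using graph by (auto simp: simplicial_graph_def letters_def mem_Times_iff)

lemma adjacent_sym: "E x y \<Longrightarrow> E y x"
  using graph by (simp add: simplicial_graph_def)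

lemma adjacent_neq: "E x y \<Longrightarrow> x \<noteq> y"
  using graph by (auto simp: simplicial_graph_def)

lemma wh_letter_swap:
  "x \<noteq> b \<Longrightarrow> x \<noteq> linv b \<Longrightarrow> wh_letter B' a x = map (repl_letter b a) (wh_letter B b x)"
  using a_neq_b a_notin linv_a_notin by (auto simp: wh_letter_def repl_letter_def)

lemma wh_swap_eq_repl_wh:
  "fst b \<notin> fst ` set w \<Longrightarrow> wh B' a w = repl b a (wh B b w)"
proof (induction w)
  case (Cons x w)
  then have "x \<noteq> b" "x \<noteq> linv b" by auto
  then show ?case using Cons wh_letter_swap by (simp add: wh_def repl_eq_map)
qed (simp add: wh_def repl_def)

lemma commutes_wh_letter:
  assumes "E (fst x) (fst y)"
  shows "commutes E (wh_letter B b x) (wh_letter B b y)"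
proof -
  have "[x, y] \<in> lists (letters X)" "[y, x] \<in> lists (letters X)"
    using adjacent_letters[OF assms] by auto
  moreover have "raag_eq E [x, y] [y, x]"
    using raag_eq.commute[of E x y "[]" "[]"] assms by simp
  ultimately have "raag_eq E (wh B b [x, y]) (wh B b [y, x])"
    by (rule raag_eq_wh)
  then show ?thesis by (simp add: commutes_def wh_def)
qed

text \<open>For y adjacent to b, the image p y q of y under (B, b) commutes with the fixed letter a,
  and cancelling y, so does p q.\<close>

lemma a_commutes_conjugators:
  assumes adj: "E (fst b) (fst y)" and y: "y \<noteq> a" "y \<noteq> linv a"
  shows "E (fst a) (fst y)"
    and "commutes E [a] ((if linv y \<in> B then [linv b] else []) @ (if y \<in> B then [b] else []))"
proof -
  define p where "p = (if linv y \<in> B then [linv b] else [])"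
  define q where "q = (if y \<in> B then [b] else [])"
  have "fst y \<in> st X E (fst a)"
    using graph adj dominates by (auto simp: lk_def simplicial_graph_def dominates_def)
  moreover have "fst y \<noteq> fst a"
    using y fst_eq_imp_eq_or_linv[of a y] by auto
  ultimately show a_adj: "E (fst a) (fst y)"
    by (auto simp: st_def lk_def)
  have "y \<noteq> b" "y \<noteq> linv b"
    using adjacent_neq[OF adj] by auto
  then have fy: "wh_letter B b y = p @ [y] @ q"
    by (simp add: wh_letter_def p_def q_def)
  have "commutes E [y] [b]"
    using commutes_adjacent adjacent_sym[OF adj] by blast
  then have "commutes E [y] p" "commutes E [y] q"
    using commutes_winv[of E "[y]" "[b]"] by (simp_all add: p_def q_def)
  then have "raag_eq E ([] @ (p @ [y]) @ q) ([] @ ([y] @ p) @ q)"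
    by (intro raag_eq_append_cong) (simp add: commutes_def raag_eq.sym)
  moreover have "wh_letter B b a = [a]"
    using a_notin linv_a_notin a_neq_b by (auto simp: wh_letter_def)
  ultimately have "commutes E [a] ([y] @ p @ q)"
    using commutes_raag_eq[of E "p @ [y] @ q" "[y] @ p @ q" "[a]"] commutes_wh_letter[OF a_adj] fy
    by simp
  then have "commutes E [a] (p @ q)"
    using commutes_append_cancel commutes_adjacent[of E a y, OF a_adj] by blast
  then show "commutes E [a] ((if linv y \<in> B then [linv b] else []) @ (if y \<in> B then [b] else []))"
    by (simp only: p_def q_def)
qed

lemma wh_letter_swap_neighbour:
  assumes "E (fst b) (fst y)" and "y \<noteq> a" "y \<noteq> linv a"
  shows "wh_letter B' a y =
    (if linv y \<in> B then [linv a] else []) @ [y] @ (if y \<in> B then [a] else [])"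
proof -
  have "y \<noteq> b" "y \<noteq> linv b"
    using adjacent_neq[OF assms(1)] by auto
  then show ?thesis
    using assms(2,3) by (auto simp: wh_letter_def)
qed

lemma b_commutes_wh_letter_swap:
  assumes adj: "E (fst b) (fst y)"
  shows "commutes E [b] (wh_letter B' a y)"
proof (cases "y = a \<or> y = linv a")
  case True
  then show ?thesis using commutes_adjacent[of E b y, OF adj] by (auto simp: wh_letter_def)
next
  case False
  then have a_adj: "E (fst a) (fst y)"
    and ac: "commutes E [a] ((if linv y \<in> B then [linv b] else []) @ (if y \<in> B then [b] else []))"
    using a_commutes_conjugators[OF adj] by blast+
  have b_y: "commutes E [b] [y]"
    using commutes_adjacent[of E b y, OF adj] .
  have gy: "wh_letter B' a y =
      (if linv y \<in> B then [linv a] else []) @ [y] @ (if y \<in> B then [a] else [])"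
    using wh_letter_swap_neighbour[OF adj] False by blast
  consider "linv y \<in> B" "y \<in> B" | "linv y \<in> B" "y \<notin> B" | "linv y \<notin> B" "y \<in> B"
    | "linv y \<notin> B" "y \<notin> B"
    by blast
  then show ?thesis
  proof cases
    case 1
    have "raag_eq E (winv [a] @ [y] @ [a]) [y]"
      by (rule raag_eq_conj_commuting[OF commutes_adjacent[of E a y, OF a_adj]])
    then have "raag_eq E [y] (wh_letter B' a y)"
      using gy 1 by (simp add: raag_eq.sym)
    then show ?thesis using commutes_raag_eq b_y by blast
  next
    case 2
    then have "commutes E [a] (winv [linv b])"
      using ac commutes_winv by (simp del: winv_Cons)
    then have "commutes E [b] [a]"
      using commutes_sym by simp
    then have "commutes E [b] (winv [a])"
      by (rule commutes_winv)
    then have "commutes E [b] ([linv a] @ [y])"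
      using commutes_append[of E "[b]" "[linv a]" "[y]"] b_y by (simp add: winv_def)
    then show ?thesis using gy 2 by simp
  next
    case 3
    then have "commutes E [b] [a]"
      using ac commutes_sym by simp
    then have "commutes E [b] ([y] @ [a])"
      using commutes_append b_y by blast
    then show ?thesis using gy 3 by simp
  next
    case 4
    then show ?thesis using gy b_y by simp
  qed
qed

lemma commutes_wh_letter_swap:
  assumes adj: "E (fst x) (fst y)"
  shows "commutes E (wh_letter B' a x) (wh_letter B' a y)"
proof -
  have b_case: "commutes E (wh_letter B' a x) (wh_letter B' a y)"
    if adj: "E (fst x) (fst y)" and x: "x = b \<or> x = linv b" for x y
  proof -
    have "wh_letter B' a b = [b]" "wh_letter B' a (linv b) = [linv b]"
      using a_neq_b linv_b_notin by (auto simp: wh_letter_def)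
    moreover have "commutes E (wh_letter B' a y) [b]"
      using b_commutes_wh_letter_swap[of y] adj x commutes_sym by auto
    moreover have "commutes E (wh_letter B' a y) (winv [b])"
      using calculation(3) by (rule commutes_winv)
    ultimately show ?thesis
      using x commutes_sym by auto
  qed
  consider "x = b \<or> x = linv b" | "y = b \<or> y = linv b"
    | "x \<noteq> b" "x \<noteq> linv b" "y \<noteq> b" "y \<noteq> linv b"
    by blast
  then show ?thesis
  proof cases
    case 1
    then show ?thesis using b_case[OF adj] by blast
  next
    case 2
    then show ?thesis using b_case[OF adjacent_sym[OF adj]] commutes_sym by blast
  next
    case 3
    have "raag_eq E (repl b a (wh_letter B b x @ wh_letter B b y))
        (repl b a (wh_letter B b y @ wh_letter B b x))"
      using commutes_wh_letter[OF adj] raag_eq_repl[OF graph dominates]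
      by (simp add: commutes_def)
    then show ?thesis using wh_letter_swap 3 by (simp add: commutes_def repl_eq_map)
  qed
qed

lemma raag_eq_wh_swap: "raag_eq E w w' \<Longrightarrow> raag_eq E (wh B' a w) (wh B' a w')"
  unfolding wh_def
  by (rule raag_eq_concat_map[of E "wh_letter B' a", OF commutes_wh_letter_swap wh_letter_linv])

lemma raag_conj_wh:
  "w \<in> lists (letters X) \<Longrightarrow> w' \<in> lists (letters X) \<Longrightarrow> raag_conj X E w w' \<Longrightarrow>
    raag_conj X E (wh B b w) (wh B b w')"
  by (rule raag_conj_hom[where F = "wh B b"])
    (simp_all add: wh_in_lists[OF b_letter B_letters] raag_eq_wh wh_append wh_winv)

lemma raag_conj_wh_swap:
  assumes "w \<in> lists (letters X)" "w' \<in> lists (letters X)" "raag_conj X E w w'"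
  shows "raag_conj X E (wh B' a w) (wh B' a w')"
proof -
  have "B' \<subseteq> letters X"
    using a_letter B_letters by blast
  moreover have "raag_eq E (wh B' a t) (wh B' a t')"
    if "t \<in> lists (letters X)" "t' \<in> lists (letters X)" "raag_eq E t t'" for t t'
    using raag_eq_wh_swap that(3) .
  ultimately show ?thesis
    by (intro raag_conj_hom[where F = "wh B' a", OF _ _ _ _ assms])
      (simp_all only: wh_in_lists[OF a_letter] wh_append wh_winv)
qed

lemma raag_conj_repl:
  "w \<in> lists (letters X) \<Longrightarrow> w' \<in> lists (letters X) \<Longrightarrow> raag_conj X E w w' \<Longrightarrow>
    raag_conj X E (repl b a w) (repl b a w')"
  by (rule raag_conj_hom[where F = "repl b a"])
    (simp_all add: repl_in_lists[OF a_letter] raag_eq_repl[OF graph dominates] repl_append repl_winv)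

lemma raag_eq_repl_wh_swap:
  assumes u: "u \<in> lists (letters X)" and supp: "fst b \<notin> supp_elem X E u"
    and v: "raag_eq E v (wh B b u)"
  shows "raag_eq E (repl b a v) (wh B' a u)"
proof -
  define w where "w = (SOME w. graph_reduced X E w \<and> raag_eq E w u)"
  have w: "graph_reduced X E w \<and> raag_eq E w u"
    unfolding w_def by (rule someI_ex[OF graph_reduced_exists[OF u]])
  then have w_lists: "w \<in> lists (letters X)"
    by (simp add: graph_reduced_def)
  have "raag_eq E (repl b a v) (repl b a (wh B b u))"
    by (rule raag_eq_repl[OF graph dominates v])
  also have "raag_eq E \<dots> (repl b a (wh B b w))"
    using raag_eq_repl[OF graph dominates raag_eq_wh[OF u w_lists raag_eq.sym]] w by blast
  also have "repl b a (wh B b w) = wh B' a w"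
    using supp by (simp add: wh_swap_eq_repl_wh[symmetric] supp_elem_def w_def)
  also have "raag_eq E \<dots> (wh B' a u)"
    using raag_eq_wh_swap w by blast
  finally show ?thesis .
qed

lemma raag_conj_repl_wh_swap:
  assumes u: "u \<in> lists (letters X)" and supp: "fst b \<notin> supp_conj X E u"
    and v: "v \<in> lists (letters X)" "raag_conj X E v (wh B b u)"
  shows "raag_conj X E (repl b a v) (wh B' a u)"
proof -
  define w where "w = (SOME w. cyc_reduced X E w \<and> raag_conj X E w u)"
  have w: "cyc_reduced X E w \<and> raag_conj X E w u"
    unfolding w_def by (rule someI_ex[OF cyc_reduced_exists[OF u]])
  then have w_lists: "w \<in> lists (letters X)"
    by (simp add: cyc_reduced_def)
  have wh_lists: "wh B b t \<in> lists (letters X)" if "t \<in> lists (letters X)" for t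
    using wh_in_lists b_in B_letters that by blast
  have "raag_conj X E (repl b a v) (repl b a (wh B b u))"
    by (rule raag_conj_repl[OF v(1) wh_lists[OF u] v(2)])
  also have "raag_conj X E \<dots> (repl b a (wh B b w))"
    using raag_conj_repl[OF wh_lists[OF u] wh_lists[OF w_lists]
        raag_conj_wh[OF u w_lists raag_conj_sym]] w by blast
  also have "repl b a (wh B b w) = wh B' a w"
    using supp by (simp add: wh_swap_eq_repl_wh[symmetric] supp_conj_def w_def)
  also have "raag_conj X E \<dots> (wh B' a u)"
    using raag_conj_wh_swap[OF w_lists u] w by blast
  finally show ?thesis .
qed

end

theorem mainTheorem17:
  fixes X :: "'v set" and E :: "'v \<Rightarrow> 'v \<Rightarrow> bool"
    and B :: "'v letter set" and a b :: "'v letter"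
  assumes "simplicial_graph X E"
    and "whitehead2 X E B b"
    and "a \<in> letters X"
    and "dominates X E a b"
    and "a \<notin> B" and "linv a \<notin> B"
  shows "(\<forall>u \<in> lists (letters X). \<forall>v.
            fst b \<notin> supp_elem X E u \<longrightarrow> graph_reduced X E v \<longrightarrow>
            raag_eq E v (wh B b u) \<longrightarrow>
            raag_eq E (repl b a v) (wh ((B - {b}) \<union> {a}) a u))
       \<and> (\<forall>u \<in> lists (letters X). \<forall>v.
            fst b \<notin> supp_conj X E u \<longrightarrow> cyc_reduced X E v \<longrightarrow>
            raag_conj X E v (wh B b u) \<longrightarrow>
            raag_conj X E (repl b a v) (wh ((B - {b}) \<union> {a}) a u))"
proof -
  interpret dominated_whitehead X E B a b
    using assms by unfold_locales
  show ?thesis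
  proof (intro conjI ballI allI impI)
    fix u v
    assume "u \<in> lists (letters X)" "fst b \<notin> supp_elem X E u" "raag_eq E v (wh B b u)"
    then show "raag_eq E (repl b a v) (wh B' a u)"
      by (rule raag_eq_repl_wh_swap)
  next
    fix u v
    assume "u \<in> lists (letters X)" "fst b \<notin> supp_conj X E u" "cyc_reduced X E v"
      "raag_conj X E v (wh B b u)"
    then show "raag_conj X E (repl b a v) (wh B' a u)"
      by (intro raag_conj_repl_wh_swap) (simp_all add: cyc_reduced_def)
  qed
qed

end
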